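(* Let $M$ be as in the context, let $\Gamma_1,\Gamma_2$ be piecewise $C^1$ cuts, and let $\gamma_1,\gamma_2\in C_1(M;\mathbb Z_2)$ be singular 1-chains representing $\Gamma_1$ and $\Gamma_2$ respectively. Then $\gamma_1-\gamma_2$ is a relative 1-cycle (i.e. $\partial_1(\gamma_1-\gamma_2)\in C_0(\partial M;\mathbb Z_2)$) if and only if $\Gamma_{1,\mathrm{odd}}=\Gamma_{2,\mathrm{odd}}$.
   Context: $M$ is a compact oriented Riemannian surface with piecewise $C^1$ (possibly empty) boundary $\partial M$. A $C^1$ curve is regular if its velocity never vanishes. A closed set $\Gamma\subset M$ is a piecewise $C^1$ cut if it is the image of a finite set of regular $C^1$ curves that intersect one another (and $\partial M$) transversely, and only do so at their endpoints; the singular chain $\sum_a\gamma_a\in C_1(M;\mathbb Z_2)$ of such a family of curves is said to represent $\Gamma$. $\partial_1$ is the singular boundary map with $\mathbb Z_2$ coefficients. For a piecewise $C^1$ cut $\Gamma$, $\Gamma_{\mathrm{odd}}$ denotes the set of points in the interior of $M$ at which an odd number of the curves composing $\Gamma$ terminate. *)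

theory Defs
  imports "HOL-Analysis.Analysis" "HOL-Homology.Homology"
begin

definition half_plane :: "(real \<times> real) set" where
  "half_plane = {z. snd z \<ge> 0}"

definition surface_chart :: "'a::euclidean_space set \<Rightarrow> 'a set \<Rightarrow> ('a \<Rightarrow> real \<times> real) \<Rightarrow> bool" where
  "surface_chart M U \<phi> \<longleftrightarrow> openin (top_of_set M) U \<and>
     (\<exists>V \<psi>. openin (top_of_set half_plane) V \<and> homeomorphism U V \<phi> \<psi>)"

definition compact_surface_with_boundary :: "'a::euclidean_space set \<Rightarrow> bool" where
  "compact_surface_with_boundary M \<longleftrightarrow> compact M \<and>
     (\<forall>x\<in>M. \<exists>U \<phi>. x \<in> U \<and> surface_chart M U \<phi>)"

definition surface_boundary :: "'a::euclidean_space set \<Rightarrow> 'a set" where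
  "surface_boundary M = {x\<in>M. \<exists>U \<phi>. x \<in> U \<and> surface_chart M U \<phi> \<and> snd (\<phi> x) = 0}"

definition regular_C1_curve :: "(real \<Rightarrow> 'a::euclidean_space) \<Rightarrow> bool" where
  "regular_C1_curve g \<longleftrightarrow> (\<exists>g'. continuous_on {0..1} g' \<and>
     (\<forall>t\<in>{0..1}. (g has_vector_derivative g' t) (at t within {0..1}) \<and> g' t \<noteq> 0))"

definition velocity :: "(real \<Rightarrow> 'a::euclidean_space) \<Rightarrow> real \<Rightarrow> 'a" where
  "velocity g t = vector_derivative g (at t within {0..1})"

definition pw_C1_cut_family :: "'a::euclidean_space set \<Rightarrow> 'i set \<Rightarrow> ('i \<Rightarrow> real \<Rightarrow> 'a) \<Rightarrow> bool" where
  "pw_C1_cut_family M A \<gamma> \<longleftrightarrow> finite A \<and>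
     (\<forall>a\<in>A. regular_C1_curve (\<gamma> a) \<and> \<gamma> a ` {0..1} \<subseteq> M) \<and>
     (\<forall>a\<in>A. \<forall>t\<in>{0..1}. \<gamma> a t \<in> surface_boundary M \<longrightarrow> t \<in> {0,1}) \<and>
     (\<forall>a\<in>A. \<forall>b\<in>A. \<forall>s\<in>{0..1}. \<forall>t\<in>{0..1}. a \<noteq> b \<and> \<gamma> a s = \<gamma> b t \<longrightarrow>
         s \<in> {0,1} \<and> t \<in> {0,1} \<and> \<not> (\<exists>c. velocity (\<gamma> a) s = c *\<^sub>R velocity (\<gamma> b) t))"

definition cut_set :: "'i set \<Rightarrow> ('i \<Rightarrow> real \<Rightarrow> 'a) \<Rightarrow> 'a set" where
  "cut_set A \<gamma> = (\<Union>a\<in>A. \<gamma> a ` {0..1})"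

text \<open>A curve on [0,1] as a singular 1-simplex; boundary is g 1 - g 0.\<close>
definition curve_simplex :: "(real \<Rightarrow> 'a) \<Rightarrow> (nat \<Rightarrow> real) \<Rightarrow> 'a" where
  "curve_simplex g = restrict (\<lambda>x. g (x 1)) (standard_simplex 1)"

text \<open>The singular 1-chain sum_a gamma_a (integer lift; read mod 2).\<close>
definition cut_chain :: "'i set \<Rightarrow> ('i \<Rightarrow> real \<Rightarrow> 'a) \<Rightarrow> 'a chain" where
  "cut_chain A \<gamma> = (\<Sum>a\<in>A. frag_of (curve_simplex (\<gamma> a)))"

definition endpoint_count :: "'i set \<Rightarrow> ('i \<Rightarrow> real \<Rightarrow> 'a) \<Rightarrow> 'a \<Rightarrow> nat" where
  "endpoint_count A \<gamma> x = card {a\<in>A. \<gamma> a 0 = x} + card {a\<in>A. \<gamma> a 1 = x}"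

definition cut_odd :: "'a::euclidean_space set \<Rightarrow> 'i set \<Rightarrow> ('i \<Rightarrow> real \<Rightarrow> 'a) \<Rightarrow> 'a set" where
  "cut_odd M A \<gamma> = {x \<in> M - surface_boundary M. odd (endpoint_count A \<gamma> x)}"

text \<open>Z_2 chains: the integer chain c reduced mod 2 lies in C_p(X;Z_2).\<close>
definition z2_singular_chain :: "nat \<Rightarrow> 'a topology \<Rightarrow> 'a chain \<Rightarrow> bool" where
  "z2_singular_chain p X c \<longleftrightarrow> (\<forall>f. odd (Poly_Mapping.lookup c f) \<longrightarrow> singular_simplex p X f)"

definition z2_singular_relcycle :: "nat \<Rightarrow> 'a topology \<Rightarrow> 'a set \<Rightarrow> 'a chain \<Rightarrow> bool" where
  "z2_singular_relcycle p X S c \<longleftrightarrow> z2_singular_chain p X c \<and>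
     z2_singular_chain (p - 1) (subtopology X S) (chain_boundary p c)"

end

theory Submission
  imports Defs
begin

text \<open>The boundary of the singular simplex of a curve is the difference of its two endpoints, so
  the coefficient of a point x in the boundary of the difference of two cut chains is, mod 2, the
  total number of curve endpoints at x. The relative cycle condition says exactly that this
  coefficient is even at every point off the boundary of M, i.e. that the two cuts have the same
  odd set. Neither the surface structure of M nor the regularity of the curves beyond continuity
  plays a role.\<close>

definition point_simplex :: "'a \<Rightarrow> (nat \<Rightarrow> real) \<Rightarrow> 'a" where
  "point_simplex x = (\<lambda>_\<in>standard_simplex 0. x)"

lemma point_simplex_eq_iff [simp]: "point_simplex x = point_simplex y \<longleftrightarrow> x = y"
  by (metis point_simplex_def restrict_apply' singletonI standard_simplex_0)

lemma singular_simplex_point_simplex [simp]: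
  "singular_simplex 0 X (point_simplex x) \<longleftrightarrow> x \<in> topspace X"
proof -
  let ?\<Delta> = "subtopology (powertop_real UNIV) (standard_simplex 0)"
  have "continuous_map ?\<Delta> X (point_simplex x) \<longleftrightarrow> continuous_map ?\<Delta> X (\<lambda>_. x)"
    by (auto intro: continuous_map_eq simp: point_simplex_def)
  then show ?thesis
    by (simp add: singular_simplex_def point_simplex_def nonempty_standard_simplex
        flip: null_topspace_iff_trivial)
qed

lemma singular_simplex_0E:
  assumes "singular_simplex 0 X f"
  obtains x where "x \<in> topspace X" and "f = point_simplex x"
proof
  let ?e = "\<lambda>j. if j = 0 then 1 else 0 :: real"
  show "f ?e \<in> topspace X"
    using assms by (auto simp: singular_simplex_def continuous_map_def standard_simplex_0)
  show "f = point_simplex (f ?e)"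
    using assms by (auto simp: singular_simplex_def point_simplex_def standard_simplex_0 extensional_def)
qed

lemma singular_face_curve_simplex:
  "singular_face 1 0 (curve_simplex g) = point_simplex (g 1)"
  "singular_face 1 1 (curve_simplex g) = point_simplex (g 0)"
  using simplical_face_in_standard_simplex[of 1 0] simplical_face_in_standard_simplex[of 1 1]
  by (auto simp: singular_face_def curve_simplex_def point_simplex_def simplical_face_def standard_simplex_0)

lemma chain_boundary_curve_simplex:
  "chain_boundary 1 (frag_of (curve_simplex g)) = frag_of (point_simplex (g 1)) - frag_of (point_simplex (g 0))"
  by (simp add: chain_boundary_of singular_face_curve_simplex[simplified])

lemma lookup_chain_boundary_cut_chain:
  assumes "finite A"
  shows "Poly_Mapping.lookup (chain_boundary 1 (cut_chain A \<gamma>)) (point_simplex x)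
       = int (card {a\<in>A. \<gamma> a 1 = x}) - int (card {a\<in>A. \<gamma> a 0 = x})"
proof -
  have "Poly_Mapping.lookup (chain_boundary 1 (cut_chain A \<gamma>)) (point_simplex x)
      = (\<Sum>a\<in>A. (if \<gamma> a 1 = x then 1 else 0) - (if \<gamma> a 0 = x then 1 else 0))"
    unfolding cut_chain_def chain_boundary_sum lookup_sum
    by (intro sum.cong) (simp_all add: lookup_minus chain_boundary_curve_simplex[simplified])
  also have "\<dots> = int (card {a\<in>A. \<gamma> a 1 = x}) - int (card {a\<in>A. \<gamma> a 0 = x})"
    using assms by (simp add: sum_subtractf sum.If_cases Int_def conj_commute)
  finally show ?thesis .
qed

lemma even_lookup_chain_boundary_cut_chain_diff:
  assumes "finite A" and "finite B"
  shows "even (Poly_Mapping.lookup (chain_boundary 1 (cut_chain A \<gamma>1 - cut_chain B \<gamma>2)) (point_simplex x))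
     \<longleftrightarrow> (odd (endpoint_count A \<gamma>1 x) \<longleftrightarrow> odd (endpoint_count B \<gamma>2 x))"
  using assms
  by (auto simp: chain_boundary_diff lookup_minus lookup_chain_boundary_cut_chain[simplified]
      endpoint_count_def)

lemma singular_simplex_curve_simplex:
  assumes "continuous_on {0..1} g" and "g ` {0..1} \<subseteq> S"
  shows "singular_simplex 1 (top_of_set S) (curve_simplex g)"
proof -
  have "continuous_map (subtopology (powertop_real UNIV) (standard_simplex 1)) euclideanreal (\<lambda>x. x 1)"
    by (rule continuous_map_from_subtopology[OF continuous_map_product_projection]) simp
  moreover have "x 1 \<in> {0..1}" if "x \<in> standard_simplex 1" for x
    using that standard_simplex_01[of 1] by (auto simp: PiE_iff)
  ultimately have coordinate:
    "continuous_map (subtopology (powertop_real UNIV) (standard_simplex 1)) (top_of_set {0..1}) (\<lambda>x. x 1)"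
    by (auto simp: continuous_map_in_subtopology)
  have "continuous_map (top_of_set {0..1::real}) (top_of_set S) g"
    using assms by (simp add: continuous_map_in_subtopology image_subset_iff Pi_iff)
  then have "continuous_map (subtopology (powertop_real UNIV) (standard_simplex 1)) (top_of_set S) (g \<circ> (\<lambda>x. x 1))"
    by (rule continuous_map_compose[OF coordinate])
  then show ?thesis
    unfolding singular_simplex_def curve_simplex_def
    by (simp add: continuous_map_eq[where f = "g \<circ> (\<lambda>x. x 1)"])
qed

lemma regular_C1_curve_imp_continuous_on:
  assumes "regular_C1_curve g"
  shows "continuous_on {0..1} g"
proof -
  obtain g' where "\<forall>t\<in>{0..1}. (g has_vector_derivative g' t) (at t within {0..1})"
    using assms unfolding regular_C1_curve_def by blast
  then show ?thesis
    by (meson continuous_on_eq_continuous_within has_vector_derivative_continuous)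
qed

lemma singular_chain_cut_chain:
  assumes "pw_C1_cut_family M A \<gamma>"
  shows "singular_chain 1 (top_of_set M) (cut_chain A \<gamma>)"
  unfolding cut_chain_def
proof (intro singular_chain_sum)
  fix a
  assume "a \<in> A"
  with assms have "regular_C1_curve (\<gamma> a)" and "\<gamma> a ` {0..1} \<subseteq> M"
    by (auto simp: pw_C1_cut_family_def)
  then show "singular_chain 1 (top_of_set M) (frag_of (curve_simplex (\<gamma> a)))"
    by (simp only: singular_chain_of singular_simplex_curve_simplex regular_C1_curve_imp_continuous_on)
qed

lemma odd_lookup_imp_in_keys: "odd (Poly_Mapping.lookup c f) \<Longrightarrow> f \<in> Poly_Mapping.keys c"
  by (auto simp: in_keys_iff)

lemma singular_chain_imp_z2_singular_chain:
  assumes "singular_chain p X c"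
  shows "z2_singular_chain p X c"
  using assms unfolding z2_singular_chain_def singular_chain_def
  by (blast dest: odd_lookup_imp_in_keys)

lemma z2_singular_chain_0_subtopology_iff:
  assumes "singular_chain 0 X c"
  shows "z2_singular_chain 0 (subtopology X S) c
     \<longleftrightarrow> (\<forall>x \<in> topspace X - S. even (Poly_Mapping.lookup c (point_simplex x)))"
proof
  assume "z2_singular_chain 0 (subtopology X S) c"
  then show "\<forall>x \<in> topspace X - S. even (Poly_Mapping.lookup c (point_simplex x))"
    by (auto simp: z2_singular_chain_def)
next
  assume even_off_S: "\<forall>x \<in> topspace X - S. even (Poly_Mapping.lookup c (point_simplex x))"
  show "z2_singular_chain 0 (subtopology X S) c"
    unfolding z2_singular_chain_def
  proof (intro allI impI)
    fix f
    assume odd_f: "odd (Poly_Mapping.lookup c f)"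
    then have "singular_simplex 0 X f"
      using assms unfolding singular_chain_def by (blast dest: odd_lookup_imp_in_keys)
    then obtain x where "x \<in> topspace X" and f: "f = point_simplex x"
      by (rule singular_simplex_0E)
    with odd_f even_off_S show "singular_simplex 0 (subtopology X S) f"
      by auto
  qed
qed

lemma z2_singular_relcycle_1_iff:
  assumes "singular_chain 1 X c"
  shows "z2_singular_relcycle 1 X S c
     \<longleftrightarrow> (\<forall>x \<in> topspace X - S. even (Poly_Mapping.lookup (chain_boundary 1 c) (point_simplex x)))"
  using assms singular_chain_boundary[OF assms]
  by (simp add: z2_singular_relcycle_def singular_chain_imp_z2_singular_chain
      z2_singular_chain_0_subtopology_iff)

theorem lemma3p8:
  fixes M :: "'a::euclidean_space set"
    and A :: "'i set" and \<gamma>1 :: "'i \<Rightarrow> real \<Rightarrow> 'a"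
    and B :: "'j set" and \<gamma>2 :: "'j \<Rightarrow> real \<Rightarrow> 'a"
  assumes "compact_surface_with_boundary M"
    and "pw_C1_cut_family M A \<gamma>1"
    and "pw_C1_cut_family M B \<gamma>2"
  shows "z2_singular_relcycle 1 (top_of_set M) (surface_boundary M)
           (cut_chain A \<gamma>1 - cut_chain B \<gamma>2)
         \<longleftrightarrow> cut_odd M A \<gamma>1 = cut_odd M B \<gamma>2"
proof -
  let ?c = "cut_chain A \<gamma>1 - cut_chain B \<gamma>2"
  have "finite A" and "finite B"
    using assms(2,3) by (auto simp: pw_C1_cut_family_def)
  have chain: "singular_chain 1 (top_of_set M) ?c"
    using assms(2,3) by (intro singular_chain_diff singular_chain_cut_chain)
  have "z2_singular_relcycle 1 (top_of_set M) (surface_boundary M) ?c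
      \<longleftrightarrow> (\<forall>x \<in> M - surface_boundary M. even (Poly_Mapping.lookup (chain_boundary 1 ?c) (point_simplex x)))"
    using z2_singular_relcycle_1_iff[OF chain] by simp
  also have "\<dots> \<longleftrightarrow> (\<forall>x \<in> M - surface_boundary M. odd (endpoint_count A \<gamma>1 x) \<longleftrightarrow> odd (endpoint_count B \<gamma>2 x))"
    by (intro ball_cong refl even_lookup_chain_boundary_cut_chain_diff \<open>finite A\<close> \<open>finite B\<close>)
  also have "\<dots> \<longleftrightarrow> cut_odd M A \<gamma>1 = cut_odd M B \<gamma>2"
    by (auto simp: cut_odd_def)
  finally show ?thesis .
qed

end
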